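(* Let $N\ge2$ and let $M$ be the Riemannian model with pole $o$ and metric $dr^2+\psi^2(r)d\omega^2$, with $\psi$ smooth, positive on $(0,\infty)$, $\psi(0)=\psi''(0)=0$, $\psi'(0)=1$. Let $\alpha\in\mathbb{R}$ and $\Phi(r)=\left(\frac{\psi(r)}{r}\right)^\alpha$. Then on $M\setminus\{o\}$, $$-\Delta_g\Phi-\alpha\left[K^{rad}_{\pi,r}+(\alpha-2+N)H^{tan}_{\pi,r}\right]\Phi=-\alpha(\alpha-2+N)\frac{\Phi}{\psi^2}-\frac{\alpha(\alpha+1)}{r^2}\Phi+\frac{2\alpha^2+\alpha(N-1)}{r}\frac{\psi'}{\psi}\Phi.$$ Hence $\Phi(r)=\left(\frac{r}{\psi(r)}\right)^{\frac{N-1}{2}}$ satisfies $$-\Delta_g\Phi+\frac{(N-1)}{4}\left[2K^{rad}_{\pi,r}+(N-3)H^{tan}_{\pi,r}\right]\Phi=\frac{(N-1)(N-3)}{4}\Phi\left(\frac{1}{\psi^2}-\frac{1}{r^2}\right).$$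
   Context: $r$ is the distance from the pole, $d\omega^2$ the round metric of $\mathbb{S}^{N-1}$; for radial functions $\Delta_g\Phi=\Phi''+(N-1)\frac{\psi'}{\psi}\Phi'$. $K^{rad}_{\pi,r}=-\psi''/\psi$ and $H^{tan}_{\pi,r}=-(\psi'^2-1)/\psi^2$. *)

theory Defs
  imports "HOL-Analysis.Analysis"
begin

text \<open>Radial quantities on the model manifold with metric dr^2 + psi(r)^2 dw^2 in dimension N.
  A radial function Phi is identified with its profile r -> Phi(r).\<close>

definition radial_laplacian :: "nat \<Rightarrow> (real \<Rightarrow> real) \<Rightarrow> (real \<Rightarrow> real) \<Rightarrow> real \<Rightarrow> real" where
  "radial_laplacian N \<psi> \<Phi> r =
     deriv (deriv \<Phi>) r + (real N - 1) * (deriv \<psi> r / \<psi> r) * deriv \<Phi> r"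

definition K_rad :: "(real \<Rightarrow> real) \<Rightarrow> real \<Rightarrow> real" where
  "K_rad \<psi> r = - deriv (deriv \<psi>) r / \<psi> r"

definition H_tan :: "(real \<Rightarrow> real) \<Rightarrow> real \<Rightarrow> real" where
  "H_tan \<psi> r = - ((deriv \<psi> r)^2 - 1) / (\<psi> r)^2"

definition smooth_fun :: "(real \<Rightarrow> real) \<Rightarrow> bool" where
  "smooth_fun f \<longleftrightarrow> (\<forall>k x. ((deriv ^^ k) f) differentiable (at x))"

end

theory Submission
  imports Defs
begin

text \<open>Writing \<open>\<Phi> = (\<psi>/r)\<^sup>\<alpha>\<close>, logarithmic differentiation gives
  \<open>\<Phi>' = \<alpha> (\<psi>'/\<psi> - 1/r) \<Phi>\<close> and
  \<open>\<Phi>'' = (\<alpha>\<^sup>2 (\<psi>'/\<psi> - 1/r)\<^sup>2 + \<alpha> (\<psi>''/\<psi> - (\<psi>'/\<psi>)\<^sup>2 + 1/r\<^sup>2)) \<Phi>\<close>;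
  substituting into the radial Laplacian and the curvature terms, the identity is field
  arithmetic. The second identity is the first one for \<open>\<alpha> = -(N-1)/2\<close>, where the coefficient
  \<open>2\<alpha>\<^sup>2 + \<alpha>(N-1)\<close> of the \<open>\<psi>'/\<psi>\<close> term vanishes.
  The computation is pointwise on \<open>r > 0\<close>.\<close>

lemma smooth_fun_has_real_derivatives:
  assumes "smooth_fun f"
  shows "(f has_real_derivative deriv f x) (at x)"
    and "(deriv f has_real_derivative deriv (deriv f) x) (at x)"
proof -
  have "\<And>k. ((deriv ^^ k) f) differentiable (at x)"
    using assms unfolding smooth_fun_def by blast
  from this[of 0] this[of 1] show "(f has_real_derivative deriv f x) (at x)"
    and "(deriv f has_real_derivative deriv (deriv f) x) (at x)"
    by (simp_all add: DERIV_deriv_iff_real_differentiable)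
qed

lemma has_real_derivative_ratio_powr:
  fixes \<psi> :: "real \<Rightarrow> real" and \<alpha> s :: real
  assumes "(\<psi> has_real_derivative D) (at s)" and "\<psi> s > 0" and "s > 0"
  shows "((\<lambda>x. (\<psi> x / x) powr \<alpha>) has_real_derivative
           (\<psi> s / s) powr \<alpha> * \<alpha> * (D / \<psi> s - 1 / s)) (at s)"
proof -
  have quotient: "((\<lambda>x. \<psi> x / x) has_real_derivative (D * s - \<psi> s) / s^2) (at s)"
    using assms by (auto intro!: derivative_eq_intros simp: power2_eq_square field_simps)
  have "((\<lambda>x. (\<psi> x / x) powr \<alpha>) has_real_derivative
          \<alpha> * (\<psi> s / s) powr (\<alpha> - of_nat 1) * ((D * s - \<psi> s) / s^2)) (at s)"
    by (rule DERIV_fun_powr[OF quotient]) (use assms in auto)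
  moreover have "\<alpha> * (\<psi> s / s) powr (\<alpha> - of_nat 1) * ((D * s - \<psi> s) / s^2)
      = (\<psi> s / s) powr \<alpha> * \<alpha> * (D / \<psi> s - 1 / s)"
    using assms by (simp add: powr_diff field_simps power2_eq_square)
  ultimately show ?thesis by simp
qed

lemma deriv_ratio_powr:
  fixes \<psi> F :: "real \<Rightarrow> real" and \<alpha> r :: real
  assumes d1: "\<And>x. (\<psi> has_real_derivative deriv \<psi> x) (at x)"
    and d2: "\<And>x. (deriv \<psi> has_real_derivative deriv (deriv \<psi>) x) (at x)"
    and \<psi>_pos: "\<And>s. s > 0 \<Longrightarrow> \<psi> s > 0"
    and F: "\<And>s. s > 0 \<Longrightarrow> F s = (\<psi> s / s) powr \<alpha>"
    and r: "r > 0"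
  shows "deriv F r = F r * \<alpha> * (deriv \<psi> r / \<psi> r - 1 / r)"
    and "deriv (deriv F) r = F r * (\<alpha>^2 * (deriv \<psi> r / \<psi> r - 1 / r)^2
           + \<alpha> * (deriv (deriv \<psi>) r / \<psi> r - (deriv \<psi> r / \<psi> r)^2 + 1 / r^2))"
proof -
  define L where "L s = deriv \<psi> s / \<psi> s - 1 / s" for s
  have DF: "(F has_real_derivative F s * \<alpha> * L s) (at s)" if "s > 0" for s
    using has_real_derivative_ratio_powr[OF d1 \<psi>_pos[OF that] that, of \<alpha>, folded F[OF that]]
    unfolding L_def[symmetric]
    by (rule has_field_derivative_transform_within_open[where S="{0<..}"])
       (use that F in \<open>auto simp: L_def\<close>)
  then show "deriv F r = F r * \<alpha> * (deriv \<psi> r / \<psi> r - 1 / r)"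
    using r by (simp add: DERIV_imp_deriv L_def)
  have "((\<lambda>s. F s * \<alpha> * L s) has_real_derivative
      F r * \<alpha> * L r * \<alpha> * L r
      + F r * \<alpha> * ((deriv (deriv \<psi>) r * \<psi> r - deriv \<psi> r * deriv \<psi> r) / (\<psi> r * \<psi> r)
                     + 1 / (r * r))) (at r)"
    unfolding L_def using r \<psi>_pos[OF r]
    by (auto intro!: derivative_eq_intros DF[unfolded L_def] d1 d2
             simp: field_simps power2_eq_square)
  then have "(deriv F has_real_derivative
      F r * \<alpha> * L r * \<alpha> * L r
      + F r * \<alpha> * ((deriv (deriv \<psi>) r * \<psi> r - deriv \<psi> r * deriv \<psi> r) / (\<psi> r * \<psi> r)
                     + 1 / (r * r))) (at r)"
    by (rule has_field_derivative_transform_within_open[where S="{0<..}"])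
       (use r in \<open>auto intro: DERIV_imp_deriv[OF DF, symmetric]\<close>)
  from DERIV_imp_deriv[OF this]
  show "deriv (deriv F) r = F r * (\<alpha>^2 * (deriv \<psi> r / \<psi> r - 1 / r)^2
           + \<alpha> * (deriv (deriv \<psi>) r / \<psi> r - (deriv \<psi> r / \<psi> r)^2 + 1 / r^2))"
    using r \<psi>_pos[OF r] by (simp add: L_def field_simps power2_eq_square)
qed

lemma radial_laplacian_ratio_powr:
  fixes N :: nat and \<psi> F :: "real \<Rightarrow> real" and \<alpha> r :: real
  assumes d1: "\<And>x. (\<psi> has_real_derivative deriv \<psi> x) (at x)"
    and d2: "\<And>x. (deriv \<psi> has_real_derivative deriv (deriv \<psi>) x) (at x)"
    and \<psi>_pos: "\<And>s. s > 0 \<Longrightarrow> \<psi> s > 0"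
    and F: "\<And>s. s > 0 \<Longrightarrow> F s = (\<psi> s / s) powr \<alpha>"
    and r: "r > 0"
  shows "- radial_laplacian N \<psi> F r
           - \<alpha> * (K_rad \<psi> r + (\<alpha> - 2 + real N) * H_tan \<psi> r) * F r
         = - \<alpha> * (\<alpha> - 2 + real N) * F r / (\<psi> r)^2
           - \<alpha> * (\<alpha> + 1) / r^2 * F r
           + (2 * \<alpha>^2 + \<alpha> * (real N - 1)) / r * (deriv \<psi> r / \<psi> r) * F r"
proof -
  note derivs = deriv_ratio_powr[OF d1 d2 \<psi>_pos F r, simplified]
  show ?thesis
    unfolding radial_laplacian_def K_rad_def H_tan_def derivs
    using r \<psi>_pos[OF r] by (simp add: field_simps power2_eq_square)
qed

lemma radial_laplacian_inverse_ratio_powr: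
  fixes N :: nat and \<psi> :: "real \<Rightarrow> real" and r :: real
  assumes d1: "\<And>x. (\<psi> has_real_derivative deriv \<psi> x) (at x)"
    and d2: "\<And>x. (deriv \<psi> has_real_derivative deriv (deriv \<psi>) x) (at x)"
    and \<psi>_pos: "\<And>s. s > 0 \<Longrightarrow> \<psi> s > 0"
    and r: "r > 0"
  defines "\<Phi> \<equiv> \<lambda>s. (s / \<psi> s) powr ((real N - 1) / 2)"
  shows "- radial_laplacian N \<psi> \<Phi> r
           + (real N - 1) / 4 * (2 * K_rad \<psi> r + (real N - 3) * H_tan \<psi> r) * \<Phi> r
         = (real N - 1) * (real N - 3) / 4 * \<Phi> r * (1 / (\<psi> r)^2 - 1 / r^2)"
proof -
  define \<alpha> where "\<alpha> = - ((real N - 1) / 2)"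
  have \<Phi>_eq: "\<Phi> s = (\<psi> s / s) powr \<alpha>" if "s > 0" for s
    using that \<psi>_pos[OF that] by (simp add: \<Phi>_def \<alpha>_def powr_minus powr_divide)
  have "- radial_laplacian N \<psi> \<Phi> r
          + (real N - 1) / 4 * (2 * K_rad \<psi> r + (real N - 3) * H_tan \<psi> r) * \<Phi> r
        = - radial_laplacian N \<psi> \<Phi> r
          - \<alpha> * (K_rad \<psi> r + (\<alpha> - 2 + real N) * H_tan \<psi> r) * \<Phi> r"
    by (simp add: \<alpha>_def field_simps)
  also have "\<dots> = - \<alpha> * (\<alpha> - 2 + real N) * \<Phi> r / (\<psi> r)^2
         - \<alpha> * (\<alpha> + 1) / r^2 * \<Phi> r
         + (2 * \<alpha>^2 + \<alpha> * (real N - 1)) / r * (deriv \<psi> r / \<psi> r) * \<Phi> r"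
    by (rule radial_laplacian_ratio_powr[OF d1 d2]) (use \<psi>_pos \<Phi>_eq r in auto)
  also have "\<dots> = (real N - 1) * (real N - 3) / 4 * \<Phi> r * (1 / (\<psi> r)^2 - 1 / r^2)"
    using r \<psi>_pos[OF r] by (simp add: \<alpha>_def field_simps power2_eq_square)
  finally show ?thesis .
qed

theorem lemma4p2:
  fixes N :: nat and \<psi> :: "real \<Rightarrow> real"
  assumes "N \<ge> 2"
    and "smooth_fun \<psi>"
    and "\<And>r. r > 0 \<Longrightarrow> \<psi> r > 0"
    and "\<psi> 0 = 0" and "deriv \<psi> 0 = 1" and "deriv (deriv \<psi>) 0 = 0"
  shows "(\<forall>\<alpha> r. r > 0 \<longrightarrow>
            (let \<Phi> = (\<lambda>s. (\<psi> s / s) powr \<alpha>) in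
              - radial_laplacian N \<psi> \<Phi> r
                - \<alpha> * (K_rad \<psi> r + (\<alpha> - 2 + real N) * H_tan \<psi> r) * \<Phi> r
              = - \<alpha> * (\<alpha> - 2 + real N) * \<Phi> r / (\<psi> r)^2
                - \<alpha> * (\<alpha> + 1) / r^2 * \<Phi> r
                + (2 * \<alpha>^2 + \<alpha> * (real N - 1)) / r * (deriv \<psi> r / \<psi> r) * \<Phi> r))
       \<and> (\<forall>r. r > 0 \<longrightarrow>
            (let \<Phi> = (\<lambda>s. (s / \<psi> s) powr ((real N - 1) / 2)) in
              - radial_laplacian N \<psi> \<Phi> r
                + (real N - 1) / 4 * (2 * K_rad \<psi> r + (real N - 3) * H_tan \<psi> r) * \<Phi> r
              = (real N - 1) * (real N - 3) / 4 * \<Phi> r * (1 / (\<psi> r)^2 - 1 / r^2)))"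
  using radial_laplacian_ratio_powr[OF smooth_fun_has_real_derivatives[OF assms(2)]]
    radial_laplacian_inverse_ratio_powr[OF smooth_fun_has_real_derivatives[OF assms(2)]]
    assms(3)
  unfolding Let_def by simp

end
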